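(* Let $X,Y$ be countable discrete metric spaces, $d\in D(X,Y)$, $d'\in D(Y,X)$, and suppose $M_{d'\circ d}(X,X)=M_{d^0}(X,X)$ $(=C^*_u(X))$. Then there exists an almost isometry $f:X\to Y$ such that $d$ and $d_f$ are almost isometric, i.e. $\sup_{x\in X,y\in Y}|d(x,y)-d_f(x,y)|<\infty$.
   Context: $D(X,Y)$: metrics on $X\sqcup Y$ extending $d_X,d_Y$. $(d'\circ d)$ is the function on $X\sqcup X'$ ($X'$ a second copy of $X$) given by $d_X$ on each copy and $(d'\circ d)(x_1,x_2')=\inf_{y\in Y}(d(x_1,y)+d'(y,x_2'))$. For such a function $\rho$, $M_\rho(X,X)$ is the norm closure of bounded operators $T$ on $l^2(X)$ for which there is $L$ with $\langle T\delta_{x_1},\delta_{x_2}\rangle=0$ whenever $\rho(x_1,x_2')\ge L$. $d^0(x_1,x_2')=d_X(x_1,x_2)+1$. An almost isometry $f:X\to Y$ satisfies $d_X(x,x')-C\le d_Y(f(x),f(x'))\le d_X(x,x')+C$ for some $C>0$; $d_f(x,y)=\inf_{\tilde x\in X}(d_X(x,\tilde x)+C/2+d_Y(f(\tilde x),y))$. *)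

theory Defs
  imports "HOL-Analysis.Analysis"
begin

definition is_metric :: "'a set \<Rightarrow> ('a \<Rightarrow> 'a \<Rightarrow> real) \<Rightarrow> bool" where
  "is_metric S m \<longleftrightarrow>
     (\<forall>x\<in>S. \<forall>y\<in>S. 0 \<le> m x y \<and> (m x y = 0 \<longleftrightarrow> x = y) \<and> m x y = m y x) \<and>
     (\<forall>x\<in>S. \<forall>y\<in>S. \<forall>z\<in>S. m x z \<le> m x y + m y z)"

definition discrete_metric :: "('a \<Rightarrow> 'a \<Rightarrow> real) \<Rightarrow> bool" where
  "discrete_metric m \<longleftrightarrow> (\<forall>x. \<exists>e>0. \<forall>y. y \<noteq> x \<longrightarrow> e \<le> m x y)"

fun glue :: "('a \<Rightarrow> 'a \<Rightarrow> real) \<Rightarrow> ('b \<Rightarrow> 'b \<Rightarrow> real) \<Rightarrow> ('a \<Rightarrow> 'b \<Rightarrow> real)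
              \<Rightarrow> ('a + 'b) \<Rightarrow> ('a + 'b) \<Rightarrow> real" where
  "glue dX dY d (Inl x) (Inl x') = dX x x'"
| "glue dX dY d (Inr y) (Inr y') = dY y y'"
| "glue dX dY d (Inl x) (Inr y) = d x y"
| "glue dX dY d (Inr y) (Inl x) = d x y"

text \<open>D(X,Y): metrics on X \<sqcup> Y extending d_X and d_Y, represented by their cross part.\<close>
definition DXY :: "('a \<Rightarrow> 'a \<Rightarrow> real) \<Rightarrow> ('b \<Rightarrow> 'b \<Rightarrow> real) \<Rightarrow> ('a \<Rightarrow> 'b \<Rightarrow> real) set" where
  "DXY dX dY = {d. is_metric UNIV (glue dX dY d)}"

text \<open>Cross part of d' \<circ> d on X \<sqcup> X'.\<close>
definition compose_metric :: "('b \<Rightarrow> 'a \<Rightarrow> real) \<Rightarrow> ('a \<Rightarrow> 'b \<Rightarrow> real) \<Rightarrow> 'a \<Rightarrow> 'a \<Rightarrow> real" where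
  "compose_metric d' d x1 x2 = (INF y. d x1 y + d' y x2)"

definition d0 :: "('a \<Rightarrow> 'a \<Rightarrow> real) \<Rightarrow> 'a \<Rightarrow> 'a \<Rightarrow> real" where
  "d0 dX x1 x2 = dX x1 x2 + 1"

text \<open>Bounded operators on l^2(X) are represented by their matrix entries
  m x1 x2 = \<langle>T \<delta>_x1, \<delta>_x2\<rangle>. opnorm_le m c says the operator norm is at most c,
  tested on finitely supported vectors (which are dense in l^2(X)).\<close>
definition opnorm_le :: "('a \<Rightarrow> 'a \<Rightarrow> complex) \<Rightarrow> real \<Rightarrow> bool" where
  "opnorm_le m c \<longleftrightarrow>
     (\<forall>F G (v::'a \<Rightarrow> complex) (w::'a \<Rightarrow> complex). finite F \<longrightarrow> finite G \<longrightarrow>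
        (\<Sum>x\<in>F. (cmod (v x))\<^sup>2) \<le> 1 \<longrightarrow> (\<Sum>x\<in>G. (cmod (w x))\<^sup>2) \<le> 1 \<longrightarrow>
        cmod (\<Sum>x1\<in>F. \<Sum>x2\<in>G. m x1 x2 * v x1 * cnj (w x2)) \<le> c)"

definition bounded_op :: "('a \<Rightarrow> 'a \<Rightarrow> complex) \<Rightarrow> bool" where
  "bounded_op m \<longleftrightarrow> (\<exists>c. opnorm_le m c)"

definition finite_prop :: "('a \<Rightarrow> 'a \<Rightarrow> real) \<Rightarrow> ('a \<Rightarrow> 'a \<Rightarrow> complex) \<Rightarrow> bool" where
  "finite_prop \<rho> m \<longleftrightarrow> (\<exists>L. \<forall>x1 x2. \<rho> x1 x2 \<ge> L \<longrightarrow> m x1 x2 = 0)"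

definition M_alg :: "('a \<Rightarrow> 'a \<Rightarrow> real) \<Rightarrow> ('a \<Rightarrow> 'a \<Rightarrow> complex) set" where
  "M_alg \<rho> = {m. bounded_op m \<and>
      (\<forall>e>0. \<exists>s. bounded_op s \<and> finite_prop \<rho> s \<and> opnorm_le (\<lambda>x1 x2. m x1 x2 - s x1 x2) e)}"

definition almost_isometry :: "('a \<Rightarrow> 'a \<Rightarrow> real) \<Rightarrow> ('b \<Rightarrow> 'b \<Rightarrow> real) \<Rightarrow> ('a \<Rightarrow> 'b) \<Rightarrow> real \<Rightarrow> bool" where
  "almost_isometry dX dY f C \<longleftrightarrow> C > 0 \<and>
     (\<forall>x x'. dX x x' - C \<le> dY (f x) (f x') \<and> dY (f x) (f x') \<le> dX x x' + C)"

definition d_f :: "('a \<Rightarrow> 'a \<Rightarrow> real) \<Rightarrow> ('b \<Rightarrow> 'b \<Rightarrow> real) \<Rightarrow> ('a \<Rightarrow> 'b) \<Rightarrow> real \<Rightarrow> 'a \<Rightarrow> 'b \<Rightarrow> real" where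
  "d_f dX dY f C x y = (INF x'. dX x x' + C / 2 + dY (f x') y)"

end

theory Submission
  imports Defs
begin

text \<open>The identity operator has propagation 1 for \<open>d\<^sup>0\<close>, so by hypothesis it is
  within norm distance 1/2 of an operator \<open>s\<close> of finite propagation \<open>L\<close> for \<open>d' \<circ> d\<close>.
  Every diagonal entry of \<open>s\<close> is then nonzero, so \<open>(d' \<circ> d)(x, x) < L\<close>, which yields
  a point \<open>f x \<in> Y\<close> with \<open>d(x, f x) < L\<close>. The triangle inequalities of the metric
  \<open>d\<close> on \<open>X \<squnion> Y\<close> then show that \<open>f\<close> is an almost isometry and that \<open>d\<close> and
  \<open>d\<^sub>f\<close> differ by at most \<open>2L\<close>.\<close>

lemma DXY_glue_triangle:
  assumes "d \<in> DXY dX dY"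
  shows "glue dX dY d a c \<le> glue dX dY d a b + glue dX dY d b c"
proof -
  have "is_metric UNIV (glue dX dY d)" using assms by (simp add: DXY_def)
  then show ?thesis unfolding is_metric_def by blast
qed

lemma DXY_nonneg:
  assumes "d \<in> DXY dX dY"
  shows "0 \<le> d x y"
proof -
  have "is_metric UNIV (glue dX dY d)" using assms by (simp add: DXY_def)
  then have "0 \<le> glue dX dY d (Inl x) (Inr y)" unfolding is_metric_def by blast
  then show ?thesis by simp
qed

lemma DXY_dY_le:
  assumes "d \<in> DXY dX dY"
  shows "dY y y' \<le> d x y + d x y'"
  using DXY_glue_triangle[OF assms, where a="Inr y" and b="Inl x" and c="Inr y'"] by simp

lemma DXY_dX_le:
  assumes "d \<in> DXY dX dY"
  shows "dX x x' \<le> d x y + d x' y"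
  using DXY_glue_triangle[OF assms, where a="Inl x" and b="Inr y" and c="Inl x'"] by simp

lemma DXY_le_dX_add:
  assumes "d \<in> DXY dX dY"
  shows "d x y \<le> dX x x' + d x' y"
  using DXY_glue_triangle[OF assms, where a="Inl x" and b="Inl x'" and c="Inr y"] by simp

lemma DXY_le_add_dY:
  assumes "d \<in> DXY dX dY"
  shows "d x y \<le> d x y' + dY y' y"
  using DXY_glue_triangle[OF assms, where a="Inl x" and b="Inr y'" and c="Inr y"] by simp

lemma compose_metric_less_imp_ex_less:
  assumes "\<And>x y. 0 \<le> d x y" and "\<And>x y. 0 \<le> d' y x"
    and "compose_metric d' d x x' < L"
  shows "\<exists>y. d x y < L"
proof -
  have "bdd_below (range (\<lambda>y. d x y + d' y x'))"
    by (rule bdd_belowI[of _ 0]) (auto simp: assms(1,2) add_nonneg_nonneg)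
  with assms(3) obtain y where "d x y + d' y x' < L"
    by (auto simp: compose_metric_def cINF_less_iff)
  with assms(2)[of y x'] show ?thesis by (intro exI[of _ y]) simp
qed

definition id_matrix :: "'a \<Rightarrow> 'a \<Rightarrow> complex" where
  "id_matrix x1 x2 = (if x1 = x2 then 1 else 0)"

lemma sum_id_matrix_bilinear:
  assumes "finite F" and "finite G"
  shows "(\<Sum>x1\<in>F. \<Sum>x2\<in>G. id_matrix x1 x2 * v x1 * cnj (w x2))
    = (\<Sum>x\<in>F \<inter> G. v x * cnj (w x))"
proof -
  have "(\<Sum>x2\<in>G. id_matrix x1 x2 * v x1 * cnj (w x2)) = (if x1 \<in> G then v x1 * cnj (w x1) else 0)"
    for x1
  proof -
    have "(\<Sum>x2\<in>G. id_matrix x1 x2 * v x1 * cnj (w x2))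
        = (\<Sum>x2\<in>G. if x1 = x2 then v x1 * cnj (w x2) else 0)"
      by (rule sum.cong) (auto simp: id_matrix_def)
    then show ?thesis using assms(2) by simp
  qed
  then show ?thesis using assms(1) by (simp add: sum.If_cases Int_commute)
qed

lemma opnorm_le_id_matrix: "opnorm_le id_matrix 1"
  unfolding opnorm_le_def
proof (intro allI impI)
  fix F G :: "'a set" and v w :: "'a \<Rightarrow> complex"
  assume F: "finite F" and G: "finite G"
    and v: "(\<Sum>x\<in>F. (cmod (v x))\<^sup>2) \<le> 1" and w: "(\<Sum>x\<in>G. (cmod (w x))\<^sup>2) \<le> 1"
  have "cmod (\<Sum>x1\<in>F. \<Sum>x2\<in>G. id_matrix x1 x2 * v x1 * cnj (w x2))
       \<le> (\<Sum>x\<in>F \<inter> G. cmod (v x) * cmod (w x))"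
    using norm_sum[of "\<lambda>x. v x * cnj (w x)" "F \<inter> G"]
    by (simp add: sum_id_matrix_bilinear[OF F G] norm_mult)
  also have "\<dots> \<le> (\<Sum>x\<in>F \<inter> G. ((cmod (v x))\<^sup>2 + (cmod (w x))\<^sup>2) / 2)"
  proof (rule sum_mono)
    fix x
    have "0 \<le> (cmod (v x) - cmod (w x))\<^sup>2" by simp
    then show "cmod (v x) * cmod (w x) \<le> ((cmod (v x))\<^sup>2 + (cmod (w x))\<^sup>2) / 2"
      by (simp add: power2_eq_square algebra_simps)
  qed
  also have "\<dots> = ((\<Sum>x\<in>F \<inter> G. (cmod (v x))\<^sup>2) + (\<Sum>x\<in>F \<inter> G. (cmod (w x))\<^sup>2)) / 2"
    by (simp add: sum_divide_distrib flip: sum.distrib)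
  also have "\<dots> \<le> ((\<Sum>x\<in>F. (cmod (v x))\<^sup>2) + (\<Sum>x\<in>G. (cmod (w x))\<^sup>2)) / 2"
    using sum_mono2[OF F, of "F \<inter> G" "\<lambda>x. (cmod (v x))\<^sup>2"]
          sum_mono2[OF G, of "F \<inter> G" "\<lambda>x. (cmod (w x))\<^sup>2"] by auto
  also have "\<dots> \<le> 1" using v w by simp
  finally show "cmod (\<Sum>x1\<in>F. \<Sum>x2\<in>G. id_matrix x1 x2 * v x1 * cnj (w x2)) \<le> 1" .
qed

lemma opnorm_le_diag:
  assumes "opnorm_le m c"
  shows "cmod (m x x) \<le> c"
proof -
  have "cmod (\<Sum>x1\<in>{x}. \<Sum>x2\<in>{x}. m x1 x2 * (\<lambda>_. 1) x1 * cnj ((\<lambda>_. 1) x2)) \<le> c"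
    using assms unfolding opnorm_le_def
    by (elim allE[of _ "{x}"] allE[of _ "{x}"] allE[of _ "\<lambda>_. 1"] allE[of _ "\<lambda>_. 1"]) simp
  then show ?thesis by simp
qed

lemma M_alg_finite_prop:
  assumes "bounded_op m" and "finite_prop \<rho> m"
  shows "m \<in> M_alg \<rho>"
proof -
  have "opnorm_le (\<lambda>x1 x2. m x1 x2 - m x1 x2) e" if "e > 0" for e
    using that by (simp add: opnorm_le_def)
  with assms show ?thesis unfolding M_alg_def by blast
qed

lemma id_matrix_in_M_alg_d0:
  assumes "\<And>x. dX x x = 0"
  shows "id_matrix \<in> M_alg (d0 dX)"
proof (rule M_alg_finite_prop)
  show "bounded_op id_matrix"
    using opnorm_le_id_matrix unfolding bounded_op_def by blast
  show "finite_prop (d0 dX) id_matrix"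
    unfolding finite_prop_def d0_def id_matrix_def
    by (rule exI[of _ 2]) (auto simp: assms)
qed

lemma M_alg_id_matrix_diag_bounded:
  assumes "id_matrix \<in> M_alg \<rho>"
  shows "\<exists>L. \<forall>x. \<rho> x x < L"
proof -
  have "\<forall>e>0. \<exists>s. bounded_op s \<and> finite_prop \<rho> s \<and>
      opnorm_le (\<lambda>x1 x2. id_matrix x1 x2 - s x1 x2) e"
    using assms unfolding M_alg_def by blast
  then obtain s where "finite_prop \<rho> s"
    and approx: "opnorm_le (\<lambda>x1 x2. id_matrix x1 x2 - s x1 x2) (1/2)"
    by (meson half_gt_zero zero_less_one)
  then obtain L where L: "\<And>x1 x2. \<rho> x1 x2 \<ge> L \<Longrightarrow> s x1 x2 = 0"
    unfolding finite_prop_def by blast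
  have "s x x \<noteq> 0" for x
    using opnorm_le_diag[OF approx, of x] by (auto simp: id_matrix_def)
  then show ?thesis using L not_le by blast
qed

lemma almost_isometry_DXY_close:
  assumes "is_metric UNIV dY" and "d \<in> DXY dX dY"
    and "\<And>x. d x (f x) \<le> B" and "B > 0"
  shows "almost_isometry dX dY f (2 * B)"
  unfolding almost_isometry_def
proof (intro conjI allI)
  fix x x'
  have "dY (f x) (f x') = dY (f x') (f x)"
    using assms(1) unfolding is_metric_def by blast
  then show "dX x x' - 2 * B \<le> dY (f x) (f x')"
    using DXY_dX_le[OF assms(2), where x=x and x'=x' and y="f x"]
      DXY_le_add_dY[OF assms(2), where x=x' and y="f x" and y'="f x'"]
      assms(3)[of x] assms(3)[of x'] by linarith
  show "dY (f x) (f x') \<le> dX x x' + 2 * B"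
    using DXY_dY_le[OF assms(2), where y="f x" and y'="f x'" and x=x]
      DXY_le_dX_add[OF assms(2), where x=x and x'=x' and y="f x'"]
      assms(3)[of x] assms(3)[of x'] by linarith
qed (use assms(4) in simp)

lemma d_f_DXY_close:
  assumes "is_metric UNIV dX" and "is_metric UNIV dY" and "d \<in> DXY dX dY"
    and "\<And>x. d x (f x) \<le> B" and "B > 0"
  shows "\<bar>d x y - d_f dX dY f (2 * B) x y\<bar> \<le> 2 * B"
proof -
  have dX: "dX x x = 0" "\<And>x'. 0 \<le> dX x x'" and dY: "\<And>y'. 0 \<le> dY y' y"
    using assms(1,2) unfolding is_metric_def by auto
  have "d x y \<le> d_f dX dY f (2 * B) x y"
    unfolding d_f_def
  proof (rule cINF_greatest)
    fix x'
    show "d x y \<le> dX x x' + 2 * B / 2 + dY (f x') y"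
      using DXY_le_dX_add[OF assms(3), where x=x and x'=x' and y=y]
        DXY_le_add_dY[OF assms(3), where x=x' and y=y and y'="f x'"]
        assms(4)[of x'] by linarith
  qed simp
  moreover have "d_f dX dY f (2 * B) x y \<le> dX x x + 2 * B / 2 + dY (f x) y"
    unfolding d_f_def
    by (rule cINF_lower)
      (auto intro!: bdd_belowI[of _ 0] add_nonneg_nonneg dX dY less_imp_le[OF assms(5)])
  ultimately show ?thesis
    using dX(1) DXY_dY_le[OF assms(3), where y="f x" and y'=y and x=x] assms(4)[of x] by linarith
qed

theorem theorem4p2:
  fixes dX :: "'a::countable \<Rightarrow> 'a \<Rightarrow> real" and dY :: "'b::countable \<Rightarrow> 'b \<Rightarrow> real"
    and d :: "'a \<Rightarrow> 'b \<Rightarrow> real" and d' :: "'b \<Rightarrow> 'a \<Rightarrow> real"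
  assumes "is_metric UNIV dX" and "is_metric UNIV dY"
    and "discrete_metric dX" and "discrete_metric dY"
    and "d \<in> DXY dX dY" and "d' \<in> DXY dY dX"
    and "M_alg (compose_metric d' d) = M_alg (d0 dX)"
  shows "\<exists>f C. almost_isometry dX dY f C \<and>
           (\<exists>K. \<forall>x y. \<bar>d x y - d_f dX dY f C x y\<bar> \<le> K)"
proof -
  have "\<And>x. dX x x = 0" using assms(1) unfolding is_metric_def by blast
  then have "id_matrix \<in> M_alg (compose_metric d' d)"
    using id_matrix_in_M_alg_d0 assms(7) by metis
  then obtain L where "\<And>x. compose_metric d' d x x < L"
    using M_alg_id_matrix_diag_bounded by blast
  then have "\<exists>y. d x y < L" for x
    by (rule compose_metric_less_imp_ex_less[OF DXY_nonneg[OF assms(5)] DXY_nonneg[OF assms(6)]])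
  then obtain f where f: "\<And>x. d x (f x) < L" by metis
  define B where "B = max L 1"
  have close: "d x (f x) \<le> B" for x using f[of x] by (simp add: B_def)
  have B: "B > 0" by (simp add: B_def)
  have "almost_isometry dX dY f (2 * B)"
    by (rule almost_isometry_DXY_close[OF assms(2,5) close B])
  moreover have "\<bar>d x y - d_f dX dY f (2 * B) x y\<bar> \<le> 2 * B" for x y
    by (rule d_f_DXY_close[OF assms(1,2,5) close B])
  ultimately show ?thesis by blast
qed

end
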